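(* Let $f:\mathbb{R}^n\to\mathbb{R}$ be $r+1$ times continuously differentiable for some integer $r\ge1$, with $\nabla f$ Lipschitz continuous with constant $L$. Let $x^*$ satisfy $\nabla f(x^* )=0$, and write $\nabla^2 f(x^* )=\sum_{i=1}^n\lambda_i v_iv_i^T$ with $\{v_1,\dots,v_n\}$ orthonormal and \[ \lambda_1\ge\dots\ge\lambda_{n-p}\ge 0>\lambda_{n-p+1}\ge\dots\ge\lambda_n \] for some $1\le p<n$; suppose $\lambda_1>0$. Let $0<\alpha<4/\lambda_1$ and $\beta\in(\max(-1+\alpha\lambda_1/2,0),1)$, and let \[ DG(x^*,x^* )=\begin{bmatrix}(1+\beta)I-\alpha\nabla^2 f(x^* ) & -\beta I\\ I & 0\end{bmatrix}. \] For $i=n-p+1,\dots,n$ define \[ \mu_i^{\mathrm{hi}}=\tfrac12\Big[(1+\beta-\alpha\lambda_i)+\sqrt{(1+\beta-\alpha\lambda_i)^2-4\beta}\Big], \] which is a real eigenvalue of $DG(x^*,x^* )$ with $\mu_i^{\mathrm{hi}}>1$. Then for each $i=n-p+1,\dots,n$, the vector $\begin{bmatrix} v_i\\ (1/\mu_i^{\mathrm{hi}})v_i\end{bmatrix}\in\mathbb{R}^{2n}$ is an eigenvector of $DG(x^*,x^* )$ corresponding to the eigenvalue $\mu_i^{\mathrm{hi}}$, and the set of these $p$ vectors forms an orthogonal basis for the invariant subspace of $\mathbb{R}^{2n}$ corresponding to the eigenvalues of $DG(x^*,x^* )$ whose magnitude is greater than $1$.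
   Context: $DG(x^*,x^* )$ is the Jacobian at $(x^*,x^* )$ of the heavy-ball map $G(z_1,z_2)=(z_1-\alpha\nabla f(z_1)+\beta(z_1-z_2),\,z_1)$. The invariant subspace corresponding to eigenvalues of magnitude greater than $1$ is the sum of the (generalized) eigenspaces of $DG(x^*,x^* )$ for eigenvalues of modulus greater than $1$. *)

theory Defs
  imports "HOL-Analysis.Analysis"
begin

definition pdiff :: "'n::finite \<Rightarrow> (real^'n \<Rightarrow> real) \<Rightarrow> real^'n \<Rightarrow> real" where
  "pdiff i g x = deriv (\<lambda>t. g (x + t *\<^sub>R axis i 1)) 0"

definition ipdiff :: "'n::finite list \<Rightarrow> (real^'n \<Rightarrow> real) \<Rightarrow> real^'n \<Rightarrow> real" where
  "ipdiff is g = foldr pdiff is g"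

definition cont_diff :: "nat \<Rightarrow> (real^'n::finite \<Rightarrow> real) \<Rightarrow> bool" where
  "cont_diff k g \<longleftrightarrow>
     (\<forall>is. length is < k \<longrightarrow> (\<forall>i x. (\<lambda>t. ipdiff is g (x + t *\<^sub>R axis i 1)) differentiable (at 0))) \<and>
     (\<forall>is. length is \<le> k \<longrightarrow> continuous_on UNIV (ipdiff is g))"

definition gradient :: "(real^'n::finite \<Rightarrow> real) \<Rightarrow> real^'n \<Rightarrow> real^'n" where
  "gradient g x = (\<chi> i. pdiff i g x)"

definition hessian :: "(real^'n::finite \<Rightarrow> real) \<Rightarrow> real^'n \<Rightarrow> real^'n^'n" where
  "hessian g x = (\<chi> i j. pdiff i (pdiff j g) x)"

definition outer :: "real^'n::finite \<Rightarrow> real^'n \<Rightarrow> real^'n^'n" where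
  "outer a b = (\<chi> i j. a $ i * b $ j)"

definition blockvec :: "real^'n::finite \<Rightarrow> real^'n \<Rightarrow> real^('n + 'n)" where
  "blockvec x y = (\<chi> k. case k of Inl j \<Rightarrow> x $ j | Inr j \<Rightarrow> y $ j)"

definition hb_jacobian :: "real \<Rightarrow> real \<Rightarrow> real^'n::finite^'n \<Rightarrow> real^('n + 'n)^('n + 'n)" where
  "hb_jacobian \<alpha> \<beta> H = (\<chi> a b. case (a, b) of
      (Inl i, Inl j) \<Rightarrow> (1 + \<beta>) * (mat 1 :: real^'n^'n) $ i $ j - \<alpha> * H $ i $ j
    | (Inl i, Inr j) \<Rightarrow> - \<beta> * (mat 1 :: real^'n^'n) $ i $ j
    | (Inr i, Inl j) \<Rightarrow> (mat 1 :: real^'n^'n) $ i $ j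
    | (Inr i, Inr j) \<Rightarrow> 0)"

definition cmat :: "real^'m::finite^'m \<Rightarrow> complex^'m^'m" where
  "cmat A = (\<chi> i j. complex_of_real (A $ i $ j))"

definition cvec :: "real^'m::finite \<Rightarrow> complex^'m" where
  "cvec z = (\<chi> i. complex_of_real (z $ i))"

definition gen_eigenspace :: "complex^'m::finite^'m \<Rightarrow> complex \<Rightarrow> (complex^'m) set" where
  "gen_eigenspace A \<mu> = {w. \<exists>k. ((\<lambda>u. A *v u - \<mu> *s u) ^^ k) w = 0}"

definition unstable_subspace :: "real^'m::finite^'m \<Rightarrow> (real^'m) set" where
  "unstable_subspace A = {z. \<exists>F w. finite F \<and>
      (\<forall>\<mu>\<in>F. cmod \<mu> > 1 \<and> w \<mu> \<in> gen_eigenspace (cmat A) \<mu>) \<and>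
      cvec z = (\<Sum>\<mu>\<in>F. w \<mu>)}"

end

theory Submission
  imports Defs
begin

text \<open>
  Write \<open>H = \<Sum>\<^sub>k \<lambda>\<^sub>k v\<^sub>k v\<^sub>k\<^sup>T\<close> and \<open>s\<^sub>k = 1 + \<beta> - \<alpha> \<lambda>\<^sub>k\<close>. The Jacobian maps the plane spanned by
  \<open>[v\<^sub>k; 0]\<close> and \<open>[0; v\<^sub>k]\<close> to itself, acting there by the companion matrix \<open>[[s\<^sub>k, -\<beta>], [1, 0]]\<close>
  of \<open>\<mu>\<^sup>2 - s\<^sub>k \<mu> + \<beta>\<close>. For \<open>\<lambda>\<^sub>k \<ge> 0\<close> the step-size condition gives \<open>|s\<^sub>k| \<le> 1 + \<beta>\<close>, so both
  roots lie in the closed unit disc; for \<open>\<lambda>\<^sub>k < 0\<close> we have \<open>s\<^sub>k > 1 + \<beta>\<close> and the roots are real,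
  \<open>\<mu>\<^sub>k\<^sup>h\<^sup>i > 1\<close> and \<open>s\<^sub>k - \<mu>\<^sub>k\<^sup>h\<^sup>i \<in> (0, 1)\<close>. Hence a generalized eigenvector for an eigenvalue of
  modulus \<open>> 1\<close> has no component in the planes with \<open>\<lambda>\<^sub>k \<ge> 0\<close>, and in the plane of a negative
  \<open>\<lambda>\<^sub>k\<close> it lies on the \<open>\<mu>\<^sub>k\<^sup>h\<^sup>i\<close>-eigenline \<open>[v\<^sub>k; v\<^sub>k / \<mu>\<^sub>k\<^sup>h\<^sup>i]\<close>.
\<close>

lemma sum_UNIV_Plus:
  "(\<Sum>k\<in>(UNIV::('a::finite + 'b::finite) set). g k) = (\<Sum>i\<in>UNIV. g (Inl i)) + (\<Sum>j\<in>UNIV. g (Inr j))"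
  by (subst UNIV_Plus_UNIV [symmetric], subst sum.Plus) (auto simp: comp_def)

lemma blockvec_Inl [simp]: "blockvec x y $ Inl j = x $ j"
  and blockvec_Inr [simp]: "blockvec x y $ Inr j = y $ j"
  by (simp_all add: blockvec_def)

lemma blockvec_eq_0_iff: "blockvec x y = 0 \<longleftrightarrow> x = 0 \<and> y = 0"
  by (auto simp: vec_eq_iff split_sum_all)

lemma blockvec_components: "blockvec (\<chi> j. z $ Inl j) (\<chi> j. z $ Inr j) = z"
  by (auto simp: vec_eq_iff split_sum_all)

lemma inner_blockvec: "blockvec x y \<bullet> blockvec x' y' = x \<bullet> x' + y \<bullet> y'"
  by (simp add: inner_vec_def sum_UNIV_Plus)

lemma scaleR_blockvec: "c *\<^sub>R blockvec x y = blockvec (c *\<^sub>R x) (c *\<^sub>R y)"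
  by (auto simp: vec_eq_iff split_sum_all)

lemma sum_blockvec:
  "(\<Sum>k\<in>S. blockvec (x k) (y k)) = blockvec (\<Sum>k\<in>S. x k) (\<Sum>k\<in>S. y k)"
  by (simp add: vec_eq_iff split_sum_all sum_component)

lemma hb_jacobian_components:
  "hb_jacobian \<alpha> \<beta> H $ Inl i $ Inl j = (if i = j then 1 + \<beta> else 0) - \<alpha> * H $ i $ j"
  "hb_jacobian \<alpha> \<beta> H $ Inl i $ Inr j = (if i = j then - \<beta> else 0)"
  "hb_jacobian \<alpha> \<beta> H $ Inr i $ Inl j = (if i = j then 1 else 0)"
  "hb_jacobian \<alpha> \<beta> H $ Inr i $ Inr j = 0"
  by (simp_all add: hb_jacobian_def mat_def)

lemma hb_jacobian_mult_blockvec: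
  "hb_jacobian \<alpha> \<beta> H *v blockvec x y = blockvec ((1 + \<beta>) *\<^sub>R x - \<alpha> *\<^sub>R (H *v x) - \<beta> *\<^sub>R y) x"
  by (auto simp: vec_eq_iff split_sum_all matrix_vector_mult_def hb_jacobian_components
      sum_UNIV_Plus algebra_simps sum_subtractf sum_distrib_left if_distrib[where f = "\<lambda>a. a * c" for c]
      if_distrib[where f = "\<lambda>a. c * a" for c] cong: if_cong)

lemma cmat_hb_jacobian_mult_Inl:
  "(cmat (hb_jacobian \<alpha> \<beta> H) *v w) $ Inl i =
     (1 + \<beta>) * w $ Inl i - \<alpha> * (\<Sum>j\<in>UNIV. complex_of_real (H $ i $ j) * w $ Inl j) - \<beta> * w $ Inr i"
  and cmat_hb_jacobian_mult_Inr: "(cmat (hb_jacobian \<alpha> \<beta> H) *v w) $ Inr i = w $ Inl i"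
  by (simp_all add: cmat_def matrix_vector_mult_def hb_jacobian_components sum_UNIV_Plus
      algebra_simps sum_subtractf sum_distrib_left if_distrib[where f = "\<lambda>a. a * c" for c]
      if_distrib[where f = "\<lambda>a. c * a" for c] if_distrib[where f = complex_of_real] cong: if_cong)

lemma cmat_mult_cvec: "cmat A *v cvec z = cvec (A *v z)"
  by (simp add: vec_eq_iff cmat_def cvec_def matrix_vector_mult_def)

lemma cvec_sum_scaleR: "cvec (\<Sum>i\<in>S. c i *\<^sub>R x i) = (\<Sum>i\<in>S. complex_of_real (c i) *s cvec (x i))"
  by (simp add: vec_eq_iff cvec_def sum_component)

lemma cvec_scaleR: "cvec (c *\<^sub>R z) = complex_of_real c *s cvec z"
  by (simp add: vec_eq_iff cvec_def)

lemma matrix_vector_mult_sub_scale_sum: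
  fixes M :: "'a::field^'m::finite^'m"
  assumes "finite S"
  shows "M *v (\<Sum>i\<in>S. d i *s x i) - \<mu> *s (\<Sum>i\<in>S. d i *s x i) = (\<Sum>i\<in>S. d i *s (M *v x i - \<mu> *s x i))"
  using assms
  by (induction S rule: finite_induct)
    (simp_all add: matrix_vector_right_distrib vector_scalar_commute vec_eq_iff algebra_simps)

section \<open>Roots of \<open>\<mu>\<^sup>2 - s \<mu> + \<beta>\<close>\<close>

lemma heavy_ball_root_gt_1:
  fixes s \<beta> :: real
  assumes "1 + \<beta> < s" "0 < \<beta>" "\<beta> < 1"
  defines "m \<equiv> (s + sqrt (s\<^sup>2 - 4 * \<beta>)) / 2"
  shows "1 < m" and "m\<^sup>2 - s * m + \<beta> = 0" and "\<bar>s - m\<bar> < 1"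
proof -
  define d where "d = sqrt (s\<^sup>2 - 4 * \<beta>)"
  have disc: "(1 - \<beta>)\<^sup>2 < s\<^sup>2 - 4 * \<beta>"
    using assms(1,2) power_strict_mono[of "1 + \<beta>" s 2] by (simp add: power2_eq_square algebra_simps)
  then have "1 - \<beta> < d"
    by (simp add: d_def real_less_rsqrt)
  have "0 < s\<^sup>2 - 4 * \<beta>"
    using disc by (smt (verit) zero_le_power2)
  then have d2: "d\<^sup>2 = s\<^sup>2 - 4 * \<beta>"
    by (simp add: d_def)
  have "d < s"
    using assms(1,2) d2 by (smt (verit) power_mono zero_le_power2)
  have m: "m = (s + d) / 2"
    by (simp add: m_def d_def)
  show root: "m\<^sup>2 - s * m + \<beta> = 0"
    unfolding m using d2 by (simp add: power2_eq_square field_simps)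
  show "1 < m"
    using m \<open>1 - \<beta> < d\<close> assms(1) by simp
  have "(s - m) * m = \<beta>"
    using root by (simp add: power2_eq_square algebra_simps)
  then have "s - m < 1"
    using \<open>1 < m\<close> assms(3) mult_right_mono[of 1 "s - m" m] by fastforce
  moreover have "0 < s - m"
    using m \<open>d < s\<close> by simp
  ultimately show "\<bar>s - m\<bar> < 1"
    by simp
qed

text \<open>Non-real roots have modulus \<open>\<surd>\<beta>\<close>; a real root with \<open>|x| > 1\<close> would give
  \<open>(|x| - 1)(|x| - \<beta>) \<le> 0\<close>.\<close>
lemma quadratic_no_root_outside_unit_disc:
  fixes s \<beta> :: real and \<mu> :: complex
  assumes "\<bar>s\<bar> \<le> 1 + \<beta>" "0 < \<beta>" "\<beta> < 1"
  shows "1 < cmod \<mu> \<Longrightarrow> \<mu>\<^sup>2 - complex_of_real s * \<mu> + complex_of_real \<beta> \<noteq> 0"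
proof (cases \<mu>)
  case (Complex x y)
  assume "1 < cmod \<mu>"
  then have outside: "1 < x\<^sup>2 + y\<^sup>2"
    using Complex by (simp add: cmod_def real_less_rsqrt)
  show ?thesis
  proof
    assume "\<mu>\<^sup>2 - complex_of_real s * \<mu> + complex_of_real \<beta> = 0"
    then have re: "x\<^sup>2 - y\<^sup>2 - s * x + \<beta> = 0" and im: "(2 * x - s) * y = 0"
      using Complex by (simp_all add: complex_eq_iff power2_eq_square algebra_simps)
    show False
    proof (cases "y = 0")
      case True
      have "\<bar>x\<bar>\<^sup>2 + \<beta> \<le> (1 + \<beta>) * \<bar>x\<bar>"
        using re True assms(1) mult_right_mono[OF assms(1), of "\<bar>x\<bar>"]
        by (simp add: abs_mult[symmetric])
      then have "(\<bar>x\<bar> - 1) * (\<bar>x\<bar> - \<beta>) \<le> 0"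
        by (simp add: power2_eq_square algebra_simps)
      moreover have "1 < \<bar>x\<bar>"
        using outside True by (auto simp: power2_gt_1_iff)
      ultimately show False
        using assms(3) by (smt (verit) mult_pos_pos)
    next
      case False
      then have "s = 2 * x"
        using im by simp
      then have "x\<^sup>2 + y\<^sup>2 = \<beta>"
        using re by (simp add: power2_eq_square algebra_simps)
      then show False
        using outside assms(3) by simp
    qed
  qed
qed

section \<open>Coordinates along an eigenvector of the Hessian\<close>

definition block_coord :: "('n \<Rightarrow> 'n::finite + 'n) \<Rightarrow> real^'n \<Rightarrow> complex^('n + 'n) \<Rightarrow> complex" where
  "block_coord side u w = (\<Sum>j\<in>UNIV. w $ side j * complex_of_real (u $ j))"

lemma block_coord_0 [simp]: "block_coord side u 0 = 0"
  by (simp add: block_coord_def)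

lemma block_coord_diff: "block_coord side u (w - w') = block_coord side u w - block_coord side u w'"
  by (simp add: block_coord_def algebra_simps sum_subtractf)

lemma block_coord_smult: "block_coord side u (c *s w) = c * block_coord side u w"
  by (simp add: block_coord_def sum_distrib_left mult.assoc)

lemma block_coord_sum: "block_coord side u (\<Sum>x\<in>F. f x) = (\<Sum>x\<in>F. block_coord side u (f x))"
  by (simp add: block_coord_def sum_component sum_distrib_right) (rule sum.swap)

lemma block_coord_cvec: "block_coord side u (cvec z) = complex_of_real ((\<chi> j. z $ side j) \<bullet> u)"
  by (simp add: block_coord_def cvec_def inner_vec_def)

lemma coords_cmat_hb_jacobian:
  assumes eig: "u v* H = lam *\<^sub>R u"
  shows "block_coord Inl u (cmat (hb_jacobian \<alpha> \<beta> H) *v w)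
           = complex_of_real (1 + \<beta> - \<alpha> * lam) * block_coord Inl u w - complex_of_real \<beta> * block_coord Inr u w"
    and "block_coord Inr u (cmat (hb_jacobian \<alpha> \<beta> H) *v w) = block_coord Inl u w"
proof -
  let ?Hw = "\<Sum>i\<in>UNIV. (\<Sum>j\<in>UNIV. complex_of_real (H $ i $ j) * w $ Inl j) * complex_of_real (u $ i)"
  have "?Hw = (\<Sum>j\<in>UNIV. w $ Inl j * complex_of_real ((u v* H) $ j))"
    by (simp add: vector_matrix_mult_def sum_distrib_left sum_distrib_right mult_ac)
      (subst sum.swap, rule refl)
  also have "\<dots> = complex_of_real lam * block_coord Inl u w"
    by (simp add: eig block_coord_def sum_distrib_left mult_ac)
  finally have Hw: "?Hw = complex_of_real lam * block_coord Inl u w" .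
  have "block_coord Inl u (cmat (hb_jacobian \<alpha> \<beta> H) *v w)
      = (\<Sum>i\<in>UNIV. (1 + complex_of_real \<beta>) * (w $ Inl i * complex_of_real (u $ i))
          - complex_of_real \<alpha> * ((\<Sum>j\<in>UNIV. complex_of_real (H $ i $ j) * w $ Inl j) * complex_of_real (u $ i))
          - complex_of_real \<beta> * (w $ Inr i * complex_of_real (u $ i)))"
    unfolding block_coord_def cmat_hb_jacobian_mult_Inl
    by (intro sum.cong refl) (simp only: left_diff_distrib mult.assoc)
  also have "\<dots> = (1 + complex_of_real \<beta>) * block_coord Inl u w - complex_of_real \<alpha> * ?Hw
      - complex_of_real \<beta> * block_coord Inr u w"
    by (simp only: sum_subtractf sum_distrib_left block_coord_def)
  finally show "block_coord Inl u (cmat (hb_jacobian \<alpha> \<beta> H) *v w)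
      = complex_of_real (1 + \<beta> - \<alpha> * lam) * block_coord Inl u w - complex_of_real \<beta> * block_coord Inr u w"
    unfolding Hw by (simp add: algebra_simps)
  show "block_coord Inr u (cmat (hb_jacobian \<alpha> \<beta> H) *v w) = block_coord Inl u w"
    by (simp add: block_coord_def cmat_hb_jacobian_mult_Inr)
qed

lemma coords_hb_jacobian_shift:
  assumes eig: "u v* H = lam *\<^sub>R u"
  shows "block_coord Inl u (cmat (hb_jacobian \<alpha> \<beta> H) *v w - \<mu> *s w)
           = (complex_of_real (1 + \<beta> - \<alpha> * lam) - \<mu>) * block_coord Inl u w
             - complex_of_real \<beta> * block_coord Inr u w"
    and "block_coord Inr u (cmat (hb_jacobian \<alpha> \<beta> H) *v w - \<mu> *s w)
           = block_coord Inl u w - \<mu> * block_coord Inr u w"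
  unfolding block_coord_diff block_coord_smult coords_cmat_hb_jacobian[OF eig]
  by (simp_all add: algebra_simps)

lemma coords_vanish_on_gen_eigenspace:
  assumes eig: "u v* H = lam *\<^sub>R u"
    and not_root: "\<mu>\<^sup>2 - complex_of_real (1 + \<beta> - \<alpha> * lam) * \<mu> + complex_of_real \<beta> \<noteq> 0"
    and "w \<in> gen_eigenspace (cmat (hb_jacobian \<alpha> \<beta> H)) \<mu>"
  shows "block_coord Inl u w = 0 \<and> block_coord Inr u w = 0"
proof -
  let ?T = "\<lambda>w. cmat (hb_jacobian \<alpha> \<beta> H) *v w - \<mu> *s w"
  let ?s = "complex_of_real (1 + \<beta> - \<alpha> * lam)"
  have "block_coord Inl u w = 0 \<and> block_coord Inr u w = 0" if "(?T ^^ m) w = 0" for m w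
    using that
  proof (induction m arbitrary: w)
    case (Suc m)
    then have "block_coord Inl u (?T w) = 0" "block_coord Inr u (?T w) = 0"
      by (simp_all add: funpow_Suc_right del: funpow.simps)
    then have "(?s - \<mu>) * block_coord Inl u w - complex_of_real \<beta> * block_coord Inr u w = 0"
      and top: "block_coord Inl u w - \<mu> * block_coord Inr u w = 0"
      by (simp_all only: coords_hb_jacobian_shift[OF eig])
    then have "(\<mu>\<^sup>2 - ?s * \<mu> + complex_of_real \<beta>) * block_coord Inr u w = 0"
      by (simp add: power2_eq_square algebra_simps)
    with not_root top show ?case by simp
  qed simp
  then show ?thesis
    using assms(3) unfolding gen_eigenspace_def by blast
qed

text \<open>The root \<open>m\<close> of \<open>\<mu>\<^sup>2 - s \<mu> + \<beta>\<close> gives the invariant line \<open>top = m \<cdot> bottom\<close> of the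
  companion matrix; the restriction of \<open>T = A - \<mu>\<close> to the quotient by that line is multiplication
  by the other root minus \<open>\<mu>\<close>, which is invertible.\<close>
lemma coords_on_gen_eigenspace_proportional:
  assumes eig: "u v* H = lam *\<^sub>R u"
    and root: "m\<^sup>2 - complex_of_real (1 + \<beta> - \<alpha> * lam) * m + complex_of_real \<beta> = 0"
    and other_root: "complex_of_real (1 + \<beta> - \<alpha> * lam) - m \<noteq> \<mu>"
    and "w \<in> gen_eigenspace (cmat (hb_jacobian \<alpha> \<beta> H)) \<mu>"
  shows "block_coord Inl u w = m * block_coord Inr u w"
proof -
  let ?T = "\<lambda>w. cmat (hb_jacobian \<alpha> \<beta> H) *v w - \<mu> *s w"
  let ?s = "complex_of_real (1 + \<beta> - \<alpha> * lam)"
  have beta: "complex_of_real \<beta> = m * (?s - m)"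
    using root by (simp add: power2_eq_square algebra_simps)
  have "block_coord Inl u w = m * block_coord Inr u w" if "(?T ^^ k) w = 0" for k w
    using that
  proof (induction k arbitrary: w)
    case (Suc k)
    then have "block_coord Inl u (?T w) = m * block_coord Inr u (?T w)"
      by (simp add: funpow_Suc_right del: funpow.simps)
    then have "(?s - \<mu>) * block_coord Inl u w - complex_of_real \<beta> * block_coord Inr u w
        = m * (block_coord Inl u w - \<mu> * block_coord Inr u w)"
      by (simp only: coords_hb_jacobian_shift[OF eig])
    then have "(?s - m - \<mu>) * (block_coord Inl u w - m * block_coord Inr u w) = 0"
      unfolding beta by (simp add: algebra_simps)
    with other_root show ?case by simp
  qed simp
  then show ?thesis
    using assms(4) unfolding gen_eigenspace_def by blast
qed

section \<open>The real unstable subspace\<close>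

lemma span_eigenvectors_subset_unstable_subspace:
  assumes "finite X" and "\<forall>x\<in>X. \<exists>m. 1 < \<bar>m\<bar> \<and> A *v x = m *\<^sub>R x"
  shows "span X \<subseteq> unstable_subspace A"
proof
  obtain m where m: "\<And>x. x \<in> X \<Longrightarrow> 1 < \<bar>m x\<bar> \<and> A *v x = m x *\<^sub>R x"
    using assms(2) by metis
  fix z assume "z \<in> span X"
  then obtain c where z: "z = (\<Sum>x\<in>X. c x *\<^sub>R x)"
    using span_finite[OF assms(1)] by auto
  define F where "F = (\<lambda>x. complex_of_real (m x)) ` X"
  define w where "w \<mu> = (\<Sum>x\<in>{x\<in>X. complex_of_real (m x) = \<mu>}. complex_of_real (c x) *s cvec x)"
    for \<mu>
  have "cvec z = (\<Sum>\<mu>\<in>F. w \<mu>)"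
    unfolding z cvec_sum_scaleR F_def w_def by (rule sum.image_gen[OF assms(1)])
  moreover have "1 < cmod \<mu> \<and> w \<mu> \<in> gen_eigenspace (cmat A) \<mu>" if "\<mu> \<in> F" for \<mu>
  proof
    show "1 < cmod \<mu>"
      using that m by (auto simp: F_def)
    have "cmat A *v w \<mu> - \<mu> *s w \<mu>
        = (\<Sum>x\<in>{x\<in>X. complex_of_real (m x) = \<mu>}.
             complex_of_real (c x) *s (cmat A *v cvec x - \<mu> *s cvec x))"
      unfolding w_def by (rule matrix_vector_mult_sub_scale_sum) (use assms(1) in simp)
    also have "\<dots> = 0"
      by (rule sum.neutral) (simp add: cmat_mult_cvec m cvec_scaleR)
    finally show "w \<mu> \<in> gen_eigenspace (cmat A) \<mu>"
      unfolding gen_eigenspace_def by (intro CollectI exI[of _ 1]) simp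
  qed
  moreover have "finite F"
    using assms(1) by (simp add: F_def)
  ultimately show "z \<in> unstable_subspace A"
    unfolding unstable_subspace_def by blast
qed

lemma unstable_subspace_coords_stable:
  assumes eig: "u v* H = lam *\<^sub>R u"
    and "\<bar>1 + \<beta> - \<alpha> * lam\<bar> \<le> 1 + \<beta>" "0 < \<beta>" "\<beta> < 1"
    and "z \<in> unstable_subspace (hb_jacobian \<alpha> \<beta> H)"
  shows "(\<chi> j. z $ Inl j) \<bullet> u = 0 \<and> (\<chi> j. z $ Inr j) \<bullet> u = 0"
proof -
  obtain F w where F: "\<forall>\<mu>\<in>F. 1 < cmod \<mu> \<and> w \<mu> \<in> gen_eigenspace (cmat (hb_jacobian \<alpha> \<beta> H)) \<mu>"
    and z: "cvec z = (\<Sum>\<mu>\<in>F. w \<mu>)"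
    using assms(5) unfolding unstable_subspace_def by blast
  have "block_coord Inl u (w \<mu>) = 0 \<and> block_coord Inr u (w \<mu>) = 0" if "\<mu> \<in> F" for \<mu>
  proof (rule coords_vanish_on_gen_eigenspace[OF eig])
    show "\<mu>\<^sup>2 - complex_of_real (1 + \<beta> - \<alpha> * lam) * \<mu> + complex_of_real \<beta> \<noteq> 0"
      using F that by (intro quadratic_no_root_outside_unit_disc[OF assms(2-4)]) blast
  qed (use F that in blast)
  then have "block_coord Inl u (cvec z) = 0 \<and> block_coord Inr u (cvec z) = 0"
    by (simp add: z block_coord_diff block_coord_smult block_coord_sum)
  then show ?thesis
    by (simp add: block_coord_cvec)
qed

lemma unstable_subspace_coords_unstable:
  assumes eig: "u v* H = lam *\<^sub>R u"
    and root: "m\<^sup>2 - (1 + \<beta> - \<alpha> * lam) * m + \<beta> = 0"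
    and other_root_small: "\<bar>1 + \<beta> - \<alpha> * lam - m\<bar> < 1"
    and "z \<in> unstable_subspace (hb_jacobian \<alpha> \<beta> H)"
  shows "(\<chi> j. z $ Inl j) \<bullet> u = m * ((\<chi> j. z $ Inr j) \<bullet> u)"
proof -
  obtain F w where F: "\<forall>\<mu>\<in>F. 1 < cmod \<mu> \<and> w \<mu> \<in> gen_eigenspace (cmat (hb_jacobian \<alpha> \<beta> H)) \<mu>"
    and z: "cvec z = (\<Sum>\<mu>\<in>F. w \<mu>)"
    using assms(4) unfolding unstable_subspace_def by blast
  have croot: "(complex_of_real m)\<^sup>2 - complex_of_real (1 + \<beta> - \<alpha> * lam) * complex_of_real m
      + complex_of_real \<beta> = 0"
    using arg_cong[OF root, of complex_of_real] by simp
  have "block_coord Inl u (w \<mu>) = complex_of_real m * block_coord Inr u (w \<mu>)" if "\<mu> \<in> F" for \<mu>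
  proof (rule coords_on_gen_eigenspace_proportional[OF eig croot])
    have "cmod (complex_of_real (1 + \<beta> - \<alpha> * lam - m)) < cmod \<mu>"
      using F that other_root_small by (simp only: norm_of_real) force
    then show "complex_of_real (1 + \<beta> - \<alpha> * lam) - complex_of_real m \<noteq> \<mu>"
      by (auto simp only: of_real_diff)
  qed (use F that in blast)
  then have "block_coord Inl u (cvec z) = complex_of_real m * block_coord Inr u (cvec z)"
    by (simp add: z block_coord_diff block_coord_smult block_coord_sum sum_distrib_left)
  then show ?thesis
    by (simp add: block_coord_cvec flip: of_real_mult)
qed

lemma sum_outer_mult_vec:
  "(\<Sum>i\<in>K. lam i *\<^sub>R outer (v i) (v i)) *v x = (\<Sum>i\<in>K. (lam i * (v i \<bullet> x)) *\<^sub>R v i)"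
  by (simp add: vec_eq_iff matrix_vector_mult_def sum_component outer_def inner_vec_def
      sum_distrib_left sum_distrib_right mult_ac) (intro allI, rule sum.swap)

lemma vec_mult_sum_outer:
  "x v* (\<Sum>i\<in>K. lam i *\<^sub>R outer (v i) (v i)) = (\<Sum>i\<in>K. (lam i * (v i \<bullet> x)) *\<^sub>R v i)"
  by (simp add: vec_eq_iff vector_matrix_mult_def sum_component outer_def inner_vec_def
      sum_distrib_left sum_distrib_right mult_ac) (intro allI, rule sum.swap)

lemma sum_orthonormal_collapse:
  assumes "finite K" "\<forall>i\<in>K. \<forall>j\<in>K. v i \<bullet> v j = (if i = j then 1 else 0)" "k \<in> K"
  shows "(\<Sum>i\<in>K. (lam i * (v i \<bullet> v k)) *\<^sub>R v i) = lam k *\<^sub>R v k"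
proof -
  have "(\<Sum>i\<in>K. (lam i * (v i \<bullet> v k)) *\<^sub>R v i) = (\<Sum>i\<in>K. if i = k then lam k *\<^sub>R v k else 0)"
    using assms(2,3) by (intro sum.cong) auto
  then show ?thesis
    using assms(1,3) by simp
qed

lemma orthonormal_expansion:
  fixes v :: "nat \<Rightarrow> real^'n::finite"
  assumes "finite K" and orth: "\<forall>i\<in>K. \<forall>j\<in>K. v i \<bullet> v j = (if i = j then 1 else 0)"
    and "card K = CARD('n)"
  shows "(\<Sum>k\<in>K. (x \<bullet> v k) *\<^sub>R v k) = x"
proof -
  have inj: "inj_on v K"
    using orth by (metis inj_onI one_neq_zero)
  have pairwise: "pairwise orthogonal (v ` K)"
    using orth by (auto simp: pairwise_def orthogonal_def)
  moreover have "0 \<notin> v ` K"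
    using orth by (metis imageE inner_zero_left zero_neq_one)
  ultimately have "independent (v ` K)"
    by (rule pairwise_orthogonal_independent)
  moreover have "card (v ` K) = CARD('n)"
    using card_image[OF inj] assms(3) by simp
  ultimately have "x \<in> span (v ` K)"
    using card_ge_dim_independent[of "v ` K" UNIV] by auto
  then have "(\<Sum>b\<in>v ` K. (x \<bullet> b) *\<^sub>R b) = x"
    using pairwise orth assms(1) by (intro orthonormal_basis_expand) (auto simp: norm_eq_sqrt_inner)
  then show ?thesis
    by (simp add: sum.reindex[OF inj])
qed

section \<open>The heavy-ball Jacobian at a strict saddle\<close>

locale heavy_ball_saddle =
  fixes H :: "real^'n::finite^'n" and lam :: "nat \<Rightarrow> real" and v :: "nat \<Rightarrow> real^'n"
    and p :: nat and \<alpha> \<beta> :: real and mu_hi :: "nat \<Rightarrow> real"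
  assumes orthonormal: "\<forall>i\<in>{1..CARD('n)}. \<forall>j\<in>{1..CARD('n)}. v i \<bullet> v j = (if i = j then 1 else 0)"
    and hessian_eq: "H = (\<Sum>i=1..CARD('n). lam i *\<^sub>R outer (v i) (v i))"
    and sorted: "\<forall>i j. 1 \<le> i \<and> i \<le> j \<and> j \<le> CARD('n) \<longrightarrow> lam j \<le> lam i"
    and lam_nonneg: "0 \<le> lam (CARD('n) - p)"
    and lam_neg: "lam (CARD('n) - p + 1) < 0"
    and alpha_pos: "0 < \<alpha>"
    and step_size: "\<alpha> * lam 1 \<le> 2 * (1 + \<beta>)"
    and beta_pos: "0 < \<beta>" and beta_less_1: "\<beta> < 1"
    and mu_hi_eq: "\<forall>i. mu_hi i = ((1 + \<beta> - \<alpha> * lam i) + sqrt ((1 + \<beta> - \<alpha> * lam i)\<^sup>2 - 4 * \<beta>)) / 2"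
begin

definition eigvec :: "nat \<Rightarrow> real^('n + 'n)" where
  "eigvec i = blockvec (v i) ((1 / mu_hi i) *\<^sub>R v i)"

lemma hessian_mult_v:
  assumes "k \<in> {1..CARD('n)}"
  shows "H *v v k = lam k *\<^sub>R v k" and "v k v* H = lam k *\<^sub>R v k"
  using sum_orthonormal_collapse[OF _ orthonormal assms]
  by (simp_all add: hessian_eq sum_outer_mult_vec vec_mult_sum_outer inner_commute)

lemma expansion_in_unstable_directions:
  assumes "\<forall>k\<in>{1..CARD('n) - p}. x \<bullet> v k = 0"
  shows "x = (\<Sum>k\<in>{CARD('n) - p + 1..CARD('n)}. (x \<bullet> v k) *\<^sub>R v k)"
proof -
  have split: "{1..CARD('n)} = {1..CARD('n) - p} \<union> {CARD('n) - p + 1..CARD('n)}"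
    by auto
  have "x = (\<Sum>k\<in>{1..CARD('n)}. (x \<bullet> v k) *\<^sub>R v k)"
    using orthonormal_expansion[OF _ orthonormal, of x] by simp
  also have "\<dots> = (\<Sum>k\<in>{1..CARD('n) - p}. (x \<bullet> v k) *\<^sub>R v k)
      + (\<Sum>k\<in>{CARD('n) - p + 1..CARD('n)}. (x \<bullet> v k) *\<^sub>R v k)"
    unfolding split by (rule sum.union_disjoint) auto
  finally show ?thesis
    using assms by simp
qed

lemma stable_trace_bound:
  assumes "k \<in> {1..CARD('n) - p}"
  shows "\<bar>1 + \<beta> - \<alpha> * lam k\<bar> \<le> 1 + \<beta>"
proof -
  have "0 \<le> lam k" "lam k \<le> lam 1"
    using assms sorted lam_nonneg by (force, auto)
  then have "0 \<le> \<alpha> * lam k" "\<alpha> * lam k \<le> \<alpha> * lam 1"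
    using alpha_pos by (simp_all add: mult_left_mono)
  then show ?thesis
    using step_size beta_pos by (simp add: abs_le_iff)
qed

lemma mu_hi_unstable:
  assumes "k \<in> {CARD('n) - p + 1..CARD('n)}"
  shows "1 < mu_hi k" "(mu_hi k)\<^sup>2 - (1 + \<beta> - \<alpha> * lam k) * mu_hi k + \<beta> = 0"
    "\<bar>1 + \<beta> - \<alpha> * lam k - mu_hi k\<bar> < 1"
proof -
  have "lam k < 0"
    using assms sorted lam_neg by (smt (verit) atLeastAtMost_iff le_add2)
  then have "1 + \<beta> < 1 + \<beta> - \<alpha> * lam k"
    using alpha_pos by (simp add: mult_pos_neg)
  from heavy_ball_root_gt_1[OF this beta_pos beta_less_1]
  show "1 < mu_hi k" "(mu_hi k)\<^sup>2 - (1 + \<beta> - \<alpha> * lam k) * mu_hi k + \<beta> = 0"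
    "\<bar>1 + \<beta> - \<alpha> * lam k - mu_hi k\<bar> < 1"
    unfolding mu_hi_eq[rule_format] by blast+
qed

lemma eigvec_eigen:
  assumes "k \<in> {CARD('n) - p + 1..CARD('n)}"
  shows "hb_jacobian \<alpha> \<beta> H *v eigvec k = mu_hi k *\<^sub>R eigvec k"
proof -
  have "(1 + \<beta>) - \<alpha> * lam k - \<beta> * (1 / mu_hi k) = mu_hi k"
    using mu_hi_unstable[OF assms] by (simp add: field_simps power2_eq_square)
  then show ?thesis
    using assms mu_hi_unstable(1)[OF assms]
    by (simp add: eigvec_def hb_jacobian_mult_blockvec scaleR_blockvec hessian_mult_v
        algebra_simps flip: scaleR_left_diff_distrib)
qed

lemma eigvec_nonzero: "k \<in> {1..CARD('n)} \<Longrightarrow> eigvec k \<noteq> 0"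
  using orthonormal by (force simp: eigvec_def blockvec_eq_0_iff)

lemma eigvec_orthogonal:
  "\<lbrakk>i \<in> {1..CARD('n)}; j \<in> {1..CARD('n)}; i \<noteq> j\<rbrakk> \<Longrightarrow> eigvec i \<bullet> eigvec j = 0"
  using orthonormal by (simp add: eigvec_def inner_blockvec)

lemma inj_on_eigvec: "inj_on eigvec {1..CARD('n)}"
  by (rule inj_onI) (metis eigvec_nonzero eigvec_orthogonal inner_eq_zero_iff)

lemma independent_eigvec: "independent (eigvec ` {CARD('n) - p + 1..CARD('n)})"
  by (rule pairwise_orthogonal_independent)
    (use eigvec_nonzero in \<open>auto simp: pairwise_def orthogonal_def intro!: eigvec_orthogonal\<close>)

lemma unstable_subspace_subset_span_eigvec:
  "unstable_subspace (hb_jacobian \<alpha> \<beta> H) \<subseteq> span (eigvec ` {CARD('n) - p + 1..CARD('n)})"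
proof
  let ?U = "{CARD('n) - p + 1..CARD('n)}"
  fix z assume z: "z \<in> unstable_subspace (hb_jacobian \<alpha> \<beta> H)"
  define x where "x = (\<chi> j. z $ Inl j)"
  define y where "y = (\<chi> j. z $ Inr j)"
  have stable: "x \<bullet> v k = 0 \<and> y \<bullet> v k = 0" if "k \<in> {1..CARD('n) - p}" for k
    using that unstable_subspace_coords_stable[OF hessian_mult_v(2) stable_trace_bound beta_pos
        beta_less_1 z]
    by (auto simp: x_def y_def)
  have x: "x = (\<Sum>k\<in>?U. (x \<bullet> v k) *\<^sub>R v k)" and y: "y = (\<Sum>k\<in>?U. (y \<bullet> v k) *\<^sub>R v k)"
    by (rule expansion_in_unstable_directions, use stable in blast)+
  have unstable: "x \<bullet> v k = mu_hi k * (y \<bullet> v k)" if "k \<in> ?U" for k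
    using that unstable_subspace_coords_unstable[OF hessian_mult_v(2) mu_hi_unstable(2,3) z]
    by (simp add: x_def y_def)
  have "(\<Sum>k\<in>?U. (mu_hi k * (y \<bullet> v k)) *\<^sub>R eigvec k)
      = blockvec (\<Sum>k\<in>?U. (x \<bullet> v k) *\<^sub>R v k) (\<Sum>k\<in>?U. (y \<bullet> v k) *\<^sub>R v k)"
    unfolding eigvec_def scaleR_blockvec sum_blockvec
    using mu_hi_unstable(1) unstable by (intro arg_cong2[of _ _ _ _ blockvec] sum.cong) force+
  also have "\<dots> = blockvec x y"
    by (simp only: x[symmetric] y[symmetric])
  also have "blockvec x y = z"
    unfolding x_def y_def by (rule blockvec_components)
  finally show "z \<in> span (eigvec ` ?U)"
    by (metis (no_types, lifting) span_base span_scale span_sum image_eqI)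
qed

lemma span_eigvec_eq_unstable_subspace:
  "span (eigvec ` {CARD('n) - p + 1..CARD('n)}) = unstable_subspace (hb_jacobian \<alpha> \<beta> H)"
proof
  have "\<exists>m. 1 < \<bar>m\<bar> \<and> hb_jacobian \<alpha> \<beta> H *v eigvec k = m *\<^sub>R eigvec k"
    if "k \<in> {CARD('n) - p + 1..CARD('n)}" for k
    using eigvec_eigen[OF that] mu_hi_unstable(1)[OF that] by (intro exI[of _ "mu_hi k"]) simp
  then show "span (eigvec ` {CARD('n) - p + 1..CARD('n)}) \<subseteq> unstable_subspace (hb_jacobian \<alpha> \<beta> H)"
    by (intro span_eigenvectors_subset_unstable_subspace) auto
qed (rule unstable_subspace_subset_span_eigvec)

end

theorem corollary2p5:
  fixes f :: "real^'n::finite \<Rightarrow> real"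
    and r :: nat and L \<alpha> \<beta> :: real and p :: nat
    and xs :: "real^'n"
    and lam :: "nat \<Rightarrow> real" and v :: "nat \<Rightarrow> real^'n"
    and mu_hi :: "nat \<Rightarrow> real"
  assumes "r \<ge> 1"
    and "cont_diff (r + 1) f"
    and "L-lipschitz_on UNIV (gradient f)"
    and "gradient f xs = 0"
    and orthonormal: "\<forall>i\<in>{1..CARD('n)}. \<forall>j\<in>{1..CARD('n)}. v i \<bullet> v j = (if i = j then 1 else 0)"
    and hess: "hessian f xs = (\<Sum>i=1..CARD('n). lam i *\<^sub>R outer (v i) (v i))"
    and "1 \<le> p" and "p < CARD('n)"
    and sorted: "\<forall>i j. 1 \<le> i \<and> i \<le> j \<and> j \<le> CARD('n) \<longrightarrow> lam j \<le> lam i"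
    and "lam (CARD('n) - p) \<ge> 0" and "lam (CARD('n) - p + 1) < 0"
    and "lam 1 > 0"
    and "0 < \<alpha>" and "\<alpha> < 4 / lam 1"
    and "max (-1 + \<alpha> * lam 1 / 2) 0 < \<beta>" and "\<beta> < 1"
    and mu_def: "\<forall>i. mu_hi i = ((1 + \<beta> - \<alpha> * lam i)
                     + sqrt ((1 + \<beta> - \<alpha> * lam i)^2 - 4 * \<beta>)) / 2"
  shows "(\<forall>i\<in>{CARD('n) - p + 1..CARD('n)}.
            mu_hi i > 1 \<and>
            blockvec (v i) ((1 / mu_hi i) *\<^sub>R v i) \<noteq> 0 \<and>
            hb_jacobian \<alpha> \<beta> (hessian f xs) *v blockvec (v i) ((1 / mu_hi i) *\<^sub>R v i)
              = mu_hi i *\<^sub>R blockvec (v i) ((1 / mu_hi i) *\<^sub>R v i))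
      \<and> inj_on (\<lambda>i. blockvec (v i) ((1 / mu_hi i) *\<^sub>R v i)) {CARD('n) - p + 1..CARD('n)}
      \<and> (\<forall>i\<in>{CARD('n) - p + 1..CARD('n)}. \<forall>j\<in>{CARD('n) - p + 1..CARD('n)}. i \<noteq> j \<longrightarrow>
            blockvec (v i) ((1 / mu_hi i) *\<^sub>R v i) \<bullet> blockvec (v j) ((1 / mu_hi j) *\<^sub>R v j) = 0)
      \<and> independent ((\<lambda>i. blockvec (v i) ((1 / mu_hi i) *\<^sub>R v i)) ` {CARD('n) - p + 1..CARD('n)})
      \<and> span ((\<lambda>i. blockvec (v i) ((1 / mu_hi i) *\<^sub>R v i)) ` {CARD('n) - p + 1..CARD('n)})
          = unstable_subspace (hb_jacobian \<alpha> \<beta> (hessian f xs))"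
proof -
  interpret hb: heavy_ball_saddle "hessian f xs" lam v p \<alpha> \<beta> mu_hi
    using assms by unfold_locales auto
  let ?U = "{CARD('n) - p + 1..CARD('n)}"
  have "?U \<subseteq> {1..CARD('n)}"
    by auto
  then have "inj_on hb.eigvec ?U"
    by (rule inj_on_subset[OF hb.inj_on_eigvec])
  moreover have "hb.eigvec i \<bullet> hb.eigvec j = 0" if "i \<in> ?U" "j \<in> ?U" "i \<noteq> j" for i j
    using that by (intro hb.eigvec_orthogonal) auto
  moreover have "hb.eigvec i \<noteq> 0" if "i \<in> ?U" for i
    using that by (intro hb.eigvec_nonzero) auto
  ultimately show ?thesis
    using hb.mu_hi_unstable(1) hb.eigvec_eigen hb.independent_eigvec hb.span_eigvec_eq_unstable_subspace
    unfolding hb.eigvec_def by auto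
qed

end
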